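(* Let $\mathbf P=(P,\leq,{}',0,1)$ be a poset with complementation such that its Dedekind-MacNeille completion $\mathrm{DM}(\mathbf P)$ is an orthomodular lattice. Then $\mathbf P$ is pseudo-orthomodular.
   Context: For $M\subseteq P$, $U(M)$ and $L(M)$ are the sets of upper and lower bounds of $M$; $U(a,b)=U(\{a,b\})$ etc. A poset with complementation is a bounded poset with antitone involution $'$ ($x\le y\Rightarrow y'\le x'$, $x''=x$) with $L(x,x')=\{0\}$, $U(x,x')=\{1\}$. It is pseudo-orthomodular if $L(U(L(x,y),y'),y)=L(x,y)$ for all $x,y\in P$, equivalently $U(L(U(x,y),y'),y)=U(x,y)$. The Dedekind-MacNeille completion $\mathrm{DM}(\mathbf P)$ is the complete lattice of subsets $B\subseteq P$ with $L(U(B))=B$ ordered by inclusion, $P$ embedded via $x\mapsto L(\{x\})$, with the antitone involution $X'=L(\{u'\mid u\in X\})$. A lattice with complementation is orthomodular if $x\vee y=((x\vee y)\wedge y')\vee y$ for all $x,y$. *)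

theory Defs
  imports Main
begin

text \<open>The poset P is the whole type 'a (a bounded partial order with bot = 0, top = 1);
  the complementation is a function cmp on 'a.\<close>

definition UB :: "'a::order set \<Rightarrow> 'a set" where
  "UB M = {x. \<forall>m\<in>M. m \<le> x}"

definition LB :: "'a::order set \<Rightarrow> 'a set" where
  "LB M = {x. \<forall>m\<in>M. x \<le> m}"

definition poset_with_complementation :: "('a::{order_bot,order_top} \<Rightarrow> 'a) \<Rightarrow> bool" where
  "poset_with_complementation cmp \<longleftrightarrow>
     (\<forall>x y. x \<le> y \<longrightarrow> cmp y \<le> cmp x) \<and>
     (\<forall>x. cmp (cmp x) = x) \<and>
     (\<forall>x. LB {x, cmp x} = {bot}) \<and>
     (\<forall>x. UB {x, cmp x} = {top})"

text \<open>L(U(L(x,y),y'),y) = L(x,y), where U(A,b) = U(A \<union> {b}).\<close>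
definition pseudo_orthomodular :: "('a::{order_bot,order_top} \<Rightarrow> 'a) \<Rightarrow> bool" where
  "pseudo_orthomodular cmp \<longleftrightarrow>
     (\<forall>x y. LB (UB (LB {x, y} \<union> {cmp y}) \<union> {y}) = LB {x, y})"

text \<open>Dedekind-MacNeille completion: carrier, order = inclusion, meet = intersection,
  join X Y = L(U(X \<union> Y)), bottom = L{0}, top = L{1}, involution X' = L{u' | u \<in> X}.\<close>
definition DM :: "'a::order set set" where
  "DM = {B. LB (UB B) = B}"

definition DM_join :: "'a::order set \<Rightarrow> 'a set \<Rightarrow> 'a set" where
  "DM_join X Y = LB (UB (X \<union> Y))"

definition DM_cmp :: "('a::order \<Rightarrow> 'a) \<Rightarrow> 'a set \<Rightarrow> 'a set" where
  "DM_cmp cmp X = LB (cmp ` X)"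

definition DM_orthomodular :: "('a::{order_bot,order_top} \<Rightarrow> 'a) \<Rightarrow> bool" where
  "DM_orthomodular cmp \<longleftrightarrow>
     (\<forall>X\<in>DM. \<forall>Y\<in>DM. X \<subseteq> Y \<longrightarrow> DM_cmp cmp Y \<subseteq> DM_cmp cmp X) \<and>
     (\<forall>X\<in>DM. DM_cmp cmp (DM_cmp cmp X) = X) \<and>
     (\<forall>X\<in>DM. X \<inter> DM_cmp cmp X = LB {bot}) \<and>
     (\<forall>X\<in>DM. DM_join X (DM_cmp cmp X) = LB {top}) \<and>
     (\<forall>X\<in>DM. \<forall>Y\<in>DM. DM_join X Y = DM_join (DM_join X Y \<inter> DM_cmp cmp Y) Y)"

end

theory Submission
  imports Defs
begin

text \<open>The complementation of \<open>P\<close> induces an antitone involution of \<open>DM(P)\<close> which sends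
  the principal ideal of \<open>y\<close> to that of \<open>y'\<close>, so it is an order anti-automorphism of the
  lattice \<open>DM(P)\<close> and satisfies the De Morgan laws. None of this needs more than \<open>'\<close> being
  an antitone involution of \<open>P\<close>, so of the hypotheses on \<open>DM(P)\<close> only the orthomodular law
  is used. Together with it, the De Morgan laws give, for \<open>A \<subseteq> B\<close> in \<open>DM(P)\<close>, the dual
  orthomodular law \<open>(A \<or> B') \<and> B = A\<close>. For \<open>A = L(x,y)\<close> and \<open>B = L(y)\<close>, the
  left-hand side is exactly \<open>L(U(L(x,y),y'),y)\<close>.\<close>

lemma LB_antimono: "S \<subseteq> T \<Longrightarrow> LB T \<subseteq> LB S"
  unfolding LB_def by auto

lemma UB_antimono: "S \<subseteq> T \<Longrightarrow> UB T \<subseteq> UB S"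
  unfolding UB_def by auto

lemma LB_Un: "LB (S \<union> T) = LB S \<inter> LB T"
  unfolding LB_def by auto

lemma UB_Un: "UB (S \<union> T) = UB S \<inter> UB T"
  unfolding UB_def by auto

lemma subset_LB_UB: "S \<subseteq> LB (UB (S::'a::order set))"
  unfolding LB_def UB_def by auto

lemma LB_UB_LB: "LB (UB (LB S)) = LB (S::'a::order set)"
  unfolding LB_def UB_def by auto

lemma UB_LB_singleton: "UB (LB {z}) = UB {z::'a::order}"
  unfolding UB_def LB_def by (auto dest: order_trans)

lemma LB_UB_singleton: "LB (UB {z}) = LB {z::'a::order}"
  using LB_UB_LB[of "{z}"] by (simp add: UB_LB_singleton)

lemma LB_in_DM: "LB S \<in> DM"
  unfolding DM_def by (simp add: LB_UB_LB)

lemma DM_join_in_DM: "DM_join X Y \<in> DM"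
  unfolding DM_join_def by (rule LB_in_DM)

lemma DM_cmp_in_DM: "DM_cmp cmp X \<in> DM"
  unfolding DM_cmp_def by (rule LB_in_DM)

lemma Int_in_DM:
  assumes "X \<in> DM" "Y \<in> DM"
  shows "X \<inter> Y \<in> DM"
proof -
  have "LB (UB (X \<inter> Y)) \<subseteq> LB (UB X) \<inter> LB (UB Y)"
    by (intro Int_greatest LB_antimono UB_antimono) auto
  with assms have "LB (UB (X \<inter> Y)) \<subseteq> X \<inter> Y"
    unfolding DM_def by simp
  then show ?thesis
    unfolding DM_def using subset_LB_UB by blast
qed

lemma DM_join_upper1: "X \<subseteq> DM_join X Y"
  unfolding DM_join_def using subset_LB_UB by blast

lemma DM_join_upper2: "Y \<subseteq> DM_join X Y"
  unfolding DM_join_def using subset_LB_UB by blast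

lemma DM_join_least:
  assumes "X \<subseteq> Z" "Y \<subseteq> Z" "Z \<in> DM"
  shows "DM_join X Y \<subseteq> Z"
proof -
  have "LB (UB (X \<union> Y)) \<subseteq> LB (UB Z)"
    using assms(1,2) by (intro LB_antimono UB_antimono) blast
  with assms(3) show ?thesis
    unfolding DM_join_def DM_def by simp
qed

lemma DM_cmp_antimono: "X \<subseteq> Y \<Longrightarrow> DM_cmp cmp Y \<subseteq> DM_cmp cmp X"
  unfolding DM_cmp_def by (intro LB_antimono image_mono)

locale antitone_involution =
  fixes cmp :: "'a::order \<Rightarrow> 'a"
  assumes antitone: "x \<le> y \<Longrightarrow> cmp y \<le> cmp x"
    and involution: "cmp (cmp x) = x"
begin

lemma antitone_iff: "cmp y \<le> cmp x \<longleftrightarrow> x \<le> y"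
  using antitone[of "cmp y" "cmp x"] antitone[of x y] by (auto simp: involution)

lemma image_LB: "cmp ` LB S = UB (cmp ` S)"
proof
  show "cmp ` LB S \<subseteq> UB (cmp ` S)"
    unfolding LB_def UB_def by (auto simp: antitone_iff)
  show "UB (cmp ` S) \<subseteq> cmp ` LB S"
  proof
    fix u
    assume "u \<in> UB (cmp ` S)"
    then have "cmp u \<in> LB S"
      unfolding LB_def UB_def using antitone_iff[of _ "cmp u"] by (auto simp: involution)
    then show "u \<in> cmp ` LB S"
      using image_eqI[of u cmp "cmp u"] by (simp add: involution)
  qed
qed

lemma DM_cmp_DM_cmp:
  assumes "X \<in> DM"
  shows "DM_cmp cmp (DM_cmp cmp X) = X"
proof -
  have "DM_cmp cmp (DM_cmp cmp X) = LB (UB (cmp ` cmp ` X))"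
    unfolding DM_cmp_def by (simp add: image_LB)
  also have "cmp ` cmp ` X = X"
    by (simp add: image_image involution)
  finally show ?thesis
    using assms unfolding DM_def by simp
qed

lemma DM_cmp_principal: "DM_cmp cmp (LB {y}) = LB {cmp y}"
  unfolding DM_cmp_def by (simp add: image_LB LB_UB_singleton)

lemma DM_cmp_Int:
  assumes "X \<in> DM" "Y \<in> DM"
  shows "DM_cmp cmp (X \<inter> Y) = DM_join (DM_cmp cmp X) (DM_cmp cmp Y)"
proof
  let ?J = "DM_join (DM_cmp cmp X) (DM_cmp cmp Y)"
  have "DM_cmp cmp ?J \<subseteq> X" "DM_cmp cmp ?J \<subseteq> Y"
    using DM_cmp_antimono[OF DM_join_upper1] DM_cmp_antimono[OF DM_join_upper2]
    by (metis DM_cmp_DM_cmp assms)+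
  then have "DM_cmp cmp (X \<inter> Y) \<subseteq> DM_cmp cmp (DM_cmp cmp ?J)"
    by (intro DM_cmp_antimono) blast
  then show "DM_cmp cmp (X \<inter> Y) \<subseteq> ?J"
    by (simp add: DM_cmp_DM_cmp DM_join_in_DM)
  show "?J \<subseteq> DM_cmp cmp (X \<inter> Y)"
    by (intro DM_join_least DM_cmp_antimono DM_cmp_in_DM) auto
qed

lemma DM_cmp_join:
  assumes "X \<in> DM" "Y \<in> DM"
  shows "DM_cmp cmp (DM_join X Y) = DM_cmp cmp X \<inter> DM_cmp cmp Y"
proof -
  have "DM_join X Y = DM_cmp cmp (DM_cmp cmp X \<inter> DM_cmp cmp Y)"
    using DM_cmp_Int[OF DM_cmp_in_DM DM_cmp_in_DM] assms by (simp add: DM_cmp_DM_cmp)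
  then show ?thesis
    by (simp add: DM_cmp_DM_cmp Int_in_DM DM_cmp_in_DM)
qed

text \<open>Apply the orthomodular law to \<open>B' \<subseteq> A'\<close> and complement both sides.\<close>
lemma DM_orthomodular_dual:
  assumes orthomodular:
      "\<forall>X\<in>DM. \<forall>Y\<in>DM. DM_join X Y = DM_join (DM_join X Y \<inter> DM_cmp cmp Y) Y"
    and "A \<in> DM" "B \<in> DM" "A \<subseteq> B"
  shows "DM_join A (DM_cmp cmp B) \<inter> B = A"
proof -
  let ?A' = "DM_cmp cmp A" and ?B' = "DM_cmp cmp B"
  have "DM_join ?A' ?B' = ?A'"
    using assms(4) by (intro subset_antisym DM_join_least DM_join_upper1 DM_cmp_antimono
        DM_cmp_in_DM) auto
  moreover have "DM_join ?A' ?B' = DM_join (DM_join ?A' ?B' \<inter> DM_cmp cmp ?B') ?B'"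
    using orthomodular DM_cmp_in_DM by blast
  ultimately have "?A' = DM_join (?A' \<inter> B) ?B'"
    using assms(3) by (simp add: DM_cmp_DM_cmp)
  then have "A = DM_cmp cmp (DM_join (?A' \<inter> B) ?B')"
    using assms(2) by (metis DM_cmp_DM_cmp)
  also have "\<dots> = DM_join A ?B' \<inter> B"
    using assms(2,3)
    by (simp add: DM_cmp_join DM_cmp_Int Int_in_DM DM_cmp_in_DM DM_cmp_DM_cmp)
  finally show ?thesis ..
qed

end

lemma poset_with_complementation_antitone_involution:
  "poset_with_complementation cmp \<Longrightarrow> antitone_involution cmp"
  unfolding poset_with_complementation_def by unfold_locales auto

lemma LB_UB_Un_singleton:
  "LB (UB (S \<union> {z}) \<union> {y}) = DM_join S (LB {z}) \<inter> LB {y}"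
  unfolding DM_join_def by (simp only: LB_Un UB_Un UB_LB_singleton)

theorem theorem4:
  fixes cmp :: "'a::{order_bot,order_top} \<Rightarrow> 'a"
  assumes "poset_with_complementation cmp"
    and "DM_orthomodular cmp"
  shows "pseudo_orthomodular cmp"
  unfolding pseudo_orthomodular_def
proof (intro allI)
  fix x y :: 'a
  interpret antitone_involution cmp
    using assms(1) by (rule poset_with_complementation_antitone_involution)
  have orthomodular:
    "\<forall>X\<in>DM. \<forall>Y\<in>DM. DM_join X Y = DM_join (DM_join X Y \<inter> DM_cmp cmp Y) Y"
    using assms(2) unfolding DM_orthomodular_def by blast
  have "LB (UB (LB {x, y} \<union> {cmp y}) \<union> {y})
      = DM_join (LB {x, y}) (DM_cmp cmp (LB {y})) \<inter> LB {y}"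
    by (simp only: LB_UB_Un_singleton DM_cmp_principal)
  also have "\<dots> = LB {x, y}"
    by (intro DM_orthomodular_dual orthomodular LB_in_DM LB_antimono) auto
  finally show "LB (UB (LB {x, y} \<union> {cmp y}) \<union> {y}) = LB {x, y}" .
qed

end
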